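(* Let $z^+=(z_1^+,\dots,z_n^+)$ and $z^-=(z_1^-,\dots,z_n^-)$ be sequences of integers, $I_1=\{i:z_i^+>0\}$, $I_2=\{i:z_i^->0\}$, and $f_z(a)=\sum_i|z_i^+-a_i^+|+\sum_i|z_i^--a_i^-|$ for bi-sequences $a=(a^+,a^-)$. Let $d\in B_n$ satisfy $f_z(d)=\min_{a\in B_n}f_z(a)$. (1) If $d_i^+>0$ for some $i\notin I_1$, then there exists $d_*\in B_n$ with $d_{*i}^+=0$ for all $i\notin I_1$ and $f_z(d_* )=f_z(d)$. (2) If $d_i^->0$ for some $i\notin I_2$, then there exists $d_*\in B_n$ with $d_{*i}^-=0$ for all $i\notin I_2$ and $f_z(d_* )=f_z(d)$.
   Context: $B_n$ is the set of all bi-degree sequences $a=(a^+,a^-)$ (out-degrees $a_i^+$, in-degrees $a_i^-$) of simple directed graphs (no loops, no multiple edges) on nodes $\{1,\dots,n\}$. *)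

theory Defs
  imports Main
begin

text \<open>Nodes are 0..n-1 (the paper's 1..n shifted). Out/in-degrees are integers,
defined as 0 outside the node set so that bi-degree sequences are determined uniquely.\<close>

definition simple_digraph :: "nat \<Rightarrow> (nat \<times> nat) set \<Rightarrow> bool" where
  "simple_digraph n E \<longleftrightarrow> E \<subseteq> {0..<n} \<times> {0..<n} \<and> (\<forall>i. (i, i) \<notin> E)"

definition out_deg :: "nat \<Rightarrow> (nat \<times> nat) set \<Rightarrow> nat \<Rightarrow> int" where
  "out_deg n E i = (if i < n then int (card {j. (i, j) \<in> E}) else 0)"

definition in_deg :: "nat \<Rightarrow> (nat \<times> nat) set \<Rightarrow> nat \<Rightarrow> int" where
  "in_deg n E i = (if i < n then int (card {j. (j, i) \<in> E}) else 0)"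

definition bideg_seqs :: "nat \<Rightarrow> ((nat \<Rightarrow> int) \<times> (nat \<Rightarrow> int)) set" where
  "bideg_seqs n = {(out_deg n E, in_deg n E) | E. simple_digraph n E}"

definition fz :: "nat \<Rightarrow> (nat \<Rightarrow> int) \<Rightarrow> (nat \<Rightarrow> int) \<Rightarrow> (nat \<Rightarrow> int) \<times> (nat \<Rightarrow> int) \<Rightarrow> int" where
  "fz n zp zm a = (\<Sum>i<n. \<bar>zp i - fst a i\<bar>) + (\<Sum>i<n. \<bar>zm i - snd a i\<bar>)"

end

theory Submission
  imports Defs
begin

text \<open>Deleting an arc (i, j) with z_i^+ \<le> 0
lowers a_i^+ \<ge> 1 by one, towards z_i^+, and changes a_j^- by one, so f_z does not increase;
symmetrically for z_j^- \<le> 0. Deleting all arcs whose tail i has z_i^+ \<le> 0 (resp. whose head j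
has z_j^- \<le> 0) therefore keeps f_z at its minimum and leaves out-degree 0 outside I_1 (resp.
in-degree 0 outside I_2).\<close>

definition bideg :: "nat \<Rightarrow> (nat \<times> nat) set \<Rightarrow> (nat \<Rightarrow> int) \<times> (nat \<Rightarrow> int)" where
  "bideg n E = (out_deg n E, in_deg n E)"

lemma bideg_in_bideg_seqs: "simple_digraph n E \<Longrightarrow> bideg n E \<in> bideg_seqs n"
  unfolding bideg_def bideg_seqs_def by blast

lemma bideg_seqsE:
  assumes "a \<in> bideg_seqs n"
  obtains E where "simple_digraph n E" "a = bideg n E"
  using assms unfolding bideg_def bideg_seqs_def by blast

lemma simple_digraph_subset: "simple_digraph n E \<Longrightarrow> E' \<subseteq> E \<Longrightarrow> simple_digraph n E'"
  unfolding simple_digraph_def by blast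

lemma simple_digraph_finite: "simple_digraph n E \<Longrightarrow> finite E"
  unfolding simple_digraph_def by (meson finite_SigmaI finite_atLeastLessThan finite_subset)

lemma out_deg_eq_0: "(\<And>j. (i, j) \<notin> E) \<Longrightarrow> out_deg n E i = 0"
  unfolding out_deg_def by simp

lemma in_deg_eq_0: "(\<And>j. (j, i) \<notin> E) \<Longrightarrow> in_deg n E i = 0"
  unfolding in_deg_def by simp

lemma sum_fun_upd_arg:
  fixes h :: "'a \<Rightarrow> 'b \<Rightarrow> 'c::ab_group_add"
  assumes "finite A" "k \<in> A"
  shows "(\<Sum>i\<in>A. h i ((g(k := v)) i)) = (\<Sum>i\<in>A. h i (g i)) - h k (g k) + h k v"
proof -
  have "(\<Sum>i\<in>A - {k}. h i ((g(k := v)) i)) = (\<Sum>i\<in>A - {k}. h i (g i))"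
    by (rule sum.cong) auto
  then show ?thesis
    using sum.remove[OF assms, of "\<lambda>i. h i ((g(k := v)) i)"] sum.remove[OF assms, of "\<lambda>i. h i (g i)"]
    by simp
qed

lemma out_deg_Diff_arc:
  assumes "simple_digraph n E" "(i, j) \<in> E"
  shows "out_deg n (E - {(i, j)}) = (out_deg n E)(i := out_deg n E i - 1)"
    and "out_deg n E i \<ge> 1"
proof -
  let ?S = "{j'. (i, j') \<in> E}"
  have "?S \<subseteq> snd ` E"
    by force
  then have fin: "finite ?S"
    using simple_digraph_finite[OF assms(1)] finite_subset by blast
  have j: "j \<in> ?S" and i_lt: "i < n"
    using assms unfolding simple_digraph_def by auto
  have Diff: "{j'. (i, j') \<in> E - {(i, j)}} = ?S - {j}"
    by auto
  have card_Diff: "card (?S - {j}) = card ?S - 1"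
    by (rule card_Diff_singleton[OF j])
  have pos: "card ?S \<ge> 1"
    using fin j by (metis One_nat_def Suc_leI card_gt_0_iff empty_iff)
  then show "out_deg n E i \<ge> 1"
    using i_lt unfolding out_deg_def by simp
  show "out_deg n (E - {(i, j)}) = (out_deg n E)(i := out_deg n E i - 1)"
  proof
    fix k
    show "out_deg n (E - {(i, j)}) k = ((out_deg n E)(i := out_deg n E i - 1)) k"
    proof (cases "k = i")
      case True
      have "out_deg n (E - {(i, j)}) i = int (card (?S - {j}))"
        using i_lt unfolding out_deg_def Diff[symmetric] by simp
      then show ?thesis
        using True i_lt pos unfolding card_Diff by (simp add: out_deg_def of_nat_diff)
    next
      case False
      then have "{j'. (k, j') \<in> E - {(i, j)}} = {j'. (k, j') \<in> E}"
        by auto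
      then show ?thesis
        using False unfolding out_deg_def by simp
    qed
  qed
qed

lemma simple_digraph_converse: "simple_digraph n E \<Longrightarrow> simple_digraph n (E\<inverse>)"
  unfolding simple_digraph_def by auto

lemma in_deg_eq_out_deg_converse: "in_deg n E = out_deg n (E\<inverse>)"
  unfolding in_deg_def out_deg_def by (simp add: fun_eq_iff)

lemma in_deg_Diff_arc:
  assumes "simple_digraph n E" "(i, j) \<in> E"
  shows "in_deg n (E - {(i, j)}) = (in_deg n E)(j := in_deg n E j - 1)"
    and "in_deg n E j \<ge> 1"
proof -
  have "(E - {(i, j)})\<inverse> = E\<inverse> - {(j, i)}"
    by auto
  then show "in_deg n (E - {(i, j)}) = (in_deg n E)(j := in_deg n E j - 1)" "in_deg n E j \<ge> 1"
    using out_deg_Diff_arc[OF simple_digraph_converse[OF assms(1)], of j i] assms(2)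
    unfolding in_deg_eq_out_deg_converse by auto
qed

lemma fz_bideg_Diff_arc_le:
  assumes E: "simple_digraph n E" and ij: "(i, j) \<in> E" and "zp i \<le> 0 \<or> zm j \<le> 0"
  shows "fz n zp zm (bideg n (E - {(i, j)})) \<le> fz n zp zm (bideg n E)"
proof -
  have i: "i \<in> {..<n}" and j: "j \<in> {..<n}"
    using E ij unfolding simple_digraph_def by auto
  have "(\<Sum>k<n. \<bar>zp k - out_deg n (E - {(i, j)}) k\<bar>)
      = (\<Sum>k<n. \<bar>zp k - out_deg n E k\<bar>) - \<bar>zp i - out_deg n E i\<bar> + \<bar>zp i - (out_deg n E i - 1)\<bar>"
    unfolding out_deg_Diff_arc(1)[OF E ij]
    by (rule sum_fun_upd_arg[OF finite_lessThan i, where h = "\<lambda>k x. \<bar>zp k - x\<bar>"])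
  moreover have "(\<Sum>k<n. \<bar>zm k - in_deg n (E - {(i, j)}) k\<bar>)
      = (\<Sum>k<n. \<bar>zm k - in_deg n E k\<bar>) - \<bar>zm j - in_deg n E j\<bar> + \<bar>zm j - (in_deg n E j - 1)\<bar>"
    unfolding in_deg_Diff_arc(1)[OF E ij]
    by (rule sum_fun_upd_arg[OF finite_lessThan j, where h = "\<lambda>k x. \<bar>zm k - x\<bar>"])
  moreover have "\<bar>zp i - (out_deg n E i - 1)\<bar> + \<bar>zm j - (in_deg n E j - 1)\<bar>
      \<le> \<bar>zp i - out_deg n E i\<bar> + \<bar>zm j - in_deg n E j\<bar>"
    using assms(3) out_deg_Diff_arc(2)[OF E ij] in_deg_Diff_arc(2)[OF E ij] by arith
  ultimately show ?thesis
    unfolding fz_def bideg_def fst_conv snd_conv by linarith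
qed

lemma Diff_descent_le:
  fixes g :: "'a set \<Rightarrow> 'b::preorder"
  assumes "finite F"
    and "\<And>E' x. E' \<subseteq> E \<Longrightarrow> x \<in> E' \<Longrightarrow> x \<in> F \<Longrightarrow> g (E' - {x}) \<le> g E'"
  shows "g (E - F) \<le> g E"
  using assms
proof (induction F rule: finite_induct)
  case empty
  then show ?case by simp
next
  case (insert x F)
  have descent: "g (E' - {y}) \<le> g E'" if "E' \<subseteq> E" "y \<in> E'" "y \<in> insert x F" for E' y
    using insert.prems that .
  have IH: "g (E - F) \<le> g E"
  proof (rule insert.IH)
    fix E' y
    assume "E' \<subseteq> E" "y \<in> E'" "y \<in> F"
    then show "g (E' - {y}) \<le> g E'"
      by (simp add: descent)
  qed
  show ?case
  proof (cases "x \<in> E - F")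
    case True
    have "g (E - insert x F) = g ((E - F) - {x})"
      by (rule arg_cong[where f = g]) blast
    also have "\<dots> \<le> g (E - F)"
      using True by (simp add: descent)
    finally show ?thesis
      using IH by (rule order_trans)
  next
    case False
    then have "E - insert x F = E - F"
      by auto
    then show ?thesis
      using IH by simp
  qed
qed

lemma fz_bideg_Diff_arcs_eq:
  assumes E: "simple_digraph n E"
    and min: "\<forall>a \<in> bideg_seqs n. fz n zp zm (bideg n E) \<le> fz n zp zm a"
    and F: "\<And>i j. (i, j) \<in> F \<Longrightarrow> zp i \<le> 0 \<or> zm j \<le> 0"
  shows "bideg n (E - F) \<in> bideg_seqs n"
    and "fz n zp zm (bideg n (E - F)) = fz n zp zm (bideg n E)"
proof -
  have simple: "simple_digraph n (E - F)"
    using E by (rule simple_digraph_subset) blast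
  then show "bideg n (E - F) \<in> bideg_seqs n"
    by (rule bideg_in_bideg_seqs)
  have "E - F = E - (F \<inter> E)"
    by blast
  moreover have "fz n zp zm (bideg n (E - (F \<inter> E))) \<le> fz n zp zm (bideg n E)"
  proof (rule Diff_descent_le[where g = "\<lambda>E. fz n zp zm (bideg n E)"])
    show "finite (F \<inter> E)"
      using simple_digraph_finite[OF E] by blast
    fix E' x assume "E' \<subseteq> E" "x \<in> E'" "x \<in> F \<inter> E"
    then show "fz n zp zm (bideg n (E' - {x})) \<le> fz n zp zm (bideg n E')"
      using simple_digraph_subset[OF E] F by (cases x) (blast intro: fz_bideg_Diff_arc_le)
  qed
  ultimately show "fz n zp zm (bideg n (E - F)) = fz n zp zm (bideg n E)"
    using min bideg_in_bideg_seqs[OF simple] by (simp add: order_antisym)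
qed

theorem proposition3:
  fixes n :: nat and zp zm :: "nat \<Rightarrow> int"
    and d :: "(nat \<Rightarrow> int) \<times> (nat \<Rightarrow> int)"
  defines "I1 \<equiv> {i. i < n \<and> zp i > 0}"
      and "I2 \<equiv> {i. i < n \<and> zm i > 0}"
  assumes d_in: "d \<in> bideg_seqs n"
      and d_min: "\<forall>a \<in> bideg_seqs n. fz n zp zm d \<le> fz n zp zm a"
  shows "((\<exists>i. i < n \<and> i \<notin> I1 \<and> fst d i > 0) \<longrightarrow>
            (\<exists>ds \<in> bideg_seqs n. (\<forall>i. i < n \<and> i \<notin> I1 \<longrightarrow> fst ds i = 0)
                 \<and> fz n zp zm ds = fz n zp zm d))
       \<and> ((\<exists>i. i < n \<and> i \<notin> I2 \<and> snd d i > 0) \<longrightarrow>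
            (\<exists>ds \<in> bideg_seqs n. (\<forall>i. i < n \<and> i \<notin> I2 \<longrightarrow> snd ds i = 0)
                 \<and> fz n zp zm ds = fz n zp zm d))"
proof -
  obtain E where E: "simple_digraph n E" and d: "d = bideg n E"
    using d_in by (rule bideg_seqsE)
  have min: "\<forall>a \<in> bideg_seqs n. fz n zp zm (bideg n E) \<le> fz n zp zm a"
    using d_min d by simp
  define F1 :: "(nat \<times> nat) set" where "F1 = {(i, j). zp i \<le> 0}"
  define F2 :: "(nat \<times> nat) set" where "F2 = {(i, j). zm j \<le> 0}"
  have "fst (bideg n (E - F1)) i = 0" if "i < n" "i \<notin> I1" for i
    using that unfolding I1_def F1_def bideg_def by (auto intro: out_deg_eq_0)
  moreover have "snd (bideg n (E - F2)) i = 0" if "i < n" "i \<notin> I2" for i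
    using that unfolding I2_def F2_def bideg_def by (auto intro: in_deg_eq_0)
  moreover have "bideg n (E - F1) \<in> bideg_seqs n" "fz n zp zm (bideg n (E - F1)) = fz n zp zm d"
    using fz_bideg_Diff_arcs_eq[OF E min, of F1] d unfolding F1_def by auto
  moreover have "bideg n (E - F2) \<in> bideg_seqs n" "fz n zp zm (bideg n (E - F2)) = fz n zp zm d"
    using fz_bideg_Diff_arcs_eq[OF E min, of F2] d unfolding F2_def by auto
  ultimately show ?thesis
    by blast
qed

end
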